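(* Let $k$ be a real number. For every $s\in\mathbb{C}$ with $\mathrm{Re}(s)>\max(1,1+k)$, $$\sum_{n\geq1}\frac{\Omega(n)\beta_k(n)}{n^s}=\zeta(s)P(s-k)\bigl(P_\Omega(s)+1\bigr).$$
   Context: $\Omega(n)$ is the number of prime factors of $n$ counted with multiplicity; $\beta_k(n)=\sum_{p\mid n}p^k$ (sum over distinct primes dividing $n$). $\zeta(s)=\sum_{n\geq1}n^{-s}$ is the Riemann zeta function, $P(s)=\sum_p p^{-s}$ is the prime zeta function, and $P_\Omega(s)=\sum_p\frac{\Omega(p)}{p^s-1}=\sum_p\frac1{p^s-1}$, sums over all primes $p$. *)

theory Defs
  imports "HOL-Analysis.Analysis" "HOL-Computational_Algebra.Primes"
begin

definition bigOmega :: "nat \<Rightarrow> nat" where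
  "bigOmega n = size (prime_factorization n)"

definition beta :: "real \<Rightarrow> nat \<Rightarrow> real" where
  "beta k n = (\<Sum>p\<in>prime_factors n. real p powr k)"

definition zeta :: "complex \<Rightarrow> complex" where
  "zeta s = (\<Sum>\<^sub>\<infinity>n\<in>{1::nat..}. 1 / (of_nat n) powr s)"

definition prime_zeta :: "complex \<Rightarrow> complex" where
  "prime_zeta s = (\<Sum>\<^sub>\<infinity>p\<in>{p::nat. prime p}. 1 / (of_nat p) powr s)"

text \<open>P_Omega(s) = sum over primes of Omega(p)/(p^s - 1) = sum of 1/(p^s - 1).\<close>
definition prime_zeta_Omega :: "complex \<Rightarrow> complex" where
  "prime_zeta_Omega s = (\<Sum>\<^sub>\<infinity>p\<in>{p::nat. prime p}. of_nat (bigOmega p) / ((of_nat p) powr s - 1))"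

end

theory Submission
  imports Defs
begin

(* Since Omega(q m) = 1 + Omega(m) for a prime q, we have
   Omega(n) beta_k(n) = sum over primes q dividing n of q^k (1 + Omega(n/q)),
   so the series is the Dirichlet product of P(s - k) with zeta(s) + sum_m Omega(m) m^-s.
   The latter is zeta(s) P_Omega(s): Omega(n) counts the prime powers p^a (a >= 1) dividing n,
   and summing p^-as over a >= 1 gives 1/(p^s - 1). Both products are the same reindexing
   (i, m) |-> d(i) m of an absolutely convergent double sum. *)

definition inv_powr :: "complex \<Rightarrow> nat \<Rightarrow> complex" where
  "inv_powr s n = 1 / of_nat n powr s"

lemma inv_powr_mult: "inv_powr s (m * n) = inv_powr s m * inv_powr s n"
  unfolding inv_powr_def by (simp add: powr_times_real)

lemma inv_powr_power: "inv_powr s (n ^ a) = inv_powr s n ^ a"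
  by (induction a) (simp_all add: inv_powr_mult inv_powr_def[of s "Suc 0"])

lemma norm_inv_powr: "norm (inv_powr s n) = real n powr (- Re s)"
  unfolding inv_powr_def by (simp add: norm_divide norm_powr_real_powr powr_minus_divide)

lemma inv_powr_diff_of_real:
  assumes "n > 0"
  shows "inv_powr (s - of_real k) n = of_real (real n powr k) * inv_powr s n"
proof -
  have "(of_nat n :: complex) powr of_real k = of_real (real n powr k)"
    using powr_of_real[of "real n" k] by simp
  then show ?thesis
    using assms unfolding inv_powr_def by (simp add: powr_diff)
qed

lemma norm_inv_powr_less_1:
  assumes "Re s > 0" "n \<ge> 2"
  shows "norm (inv_powr s n) < 1"
  unfolding norm_inv_powr using assms by (intro powr_less_one) auto

lemma inv_powr_summable_on:
  assumes "Re s > 1"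
  shows "inv_powr s summable_on A"
proof -
  have "summable (\<lambda>n. norm (inv_powr s n))"
    unfolding norm_inv_powr using assms by (subst summable_real_powr_iff) auto
  then have "inv_powr s summable_on UNIV"
    by (rule norm_summable_imp_summable_on)
  then show ?thesis
    by (rule summable_on_subset_banach) simp
qed

lemma has_sum_zeta: "Re s > 1 \<Longrightarrow> (inv_powr s has_sum zeta s) {1..}"
  using has_sum_infsum[OF inv_powr_summable_on] by (simp add: zeta_def inv_powr_def[abs_def])

lemma has_sum_prime_zeta: "Re s > 1 \<Longrightarrow> (inv_powr s has_sum prime_zeta s) {p. prime p}"
  using has_sum_infsum[OF inv_powr_summable_on] by (simp add: prime_zeta_def inv_powr_def[abs_def])

lemma has_sum_mult_complex:
  fixes f :: "'a \<Rightarrow> complex" and g :: "'b \<Rightarrow> complex"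
  assumes f: "(f has_sum a) A" and g: "(g has_sum b) B"
  shows "((\<lambda>(x, y). f x * g y) has_sum a * b) (A \<times> B)"
proof (rule has_sum_SigmaI)
  have f_abs: "(\<lambda>x. norm (f x)) summable_on A" and g_abs: "(\<lambda>y. norm (g y)) summable_on B"
    using f g by (auto simp: summable_on_iff_abs_summable_on_complex[symmetric] dest: has_sum_imp_summable)
  have "(\<lambda>(x, y). norm (f x) * norm (g y)) summable_on A \<times> B"
    by (rule summable_on_SigmaI[where g = "\<lambda>x. norm (f x) * (\<Sum>\<^sub>\<infinity>y\<in>B. norm (g y))"])
       (use has_sum_cmult_right[OF has_sum_infsum[OF g_abs]] summable_on_cmult_left[OF f_abs] in auto)
  then show "(\<lambda>(x, y). f x * g y) summable_on A \<times> B"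
    by (simp add: summable_on_iff_abs_summable_on_complex case_prod_unfold norm_mult)
qed (use has_sum_cmult_right[OF g] has_sum_cmult_left[OF f] in auto)

lemma has_sum_dirichlet_product:
  fixes d :: "'i \<Rightarrow> nat" and c :: "'i \<Rightarrow> complex" and g :: "nat \<Rightarrow> complex"
  assumes d_pos: "\<And>i. i \<in> I \<Longrightarrow> d i > 0"
    and finite_divisors: "\<And>n. n > 0 \<Longrightarrow> finite {i \<in> I. d i dvd n}"
    and c: "((\<lambda>i. c i * inv_powr s (d i)) has_sum a) I"
    and g: "((\<lambda>m. g m * inv_powr s m) has_sum b) {1..}"
  shows "((\<lambda>n. (\<Sum>i | i \<in> I \<and> d i dvd n. c i * g (n div d i)) * inv_powr s n) has_sum a * b) {1..}"
proof -
  define t where "t = (\<lambda>(n, i). c i * g (n div d i) * inv_powr s n)"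
  have "((\<lambda>(i, m). c i * inv_powr s (d i) * (g m * inv_powr s m)) has_sum a * b) (I \<times> {1..})"
    using has_sum_mult_complex[OF c g] .
  also have "?this \<longleftrightarrow> (t has_sum a * b) (SIGMA n:{1..}. {i \<in> I. d i dvd n})"
    by (rule has_sum_reindex_bij_witness[where j = "\<lambda>(i, m). (d i * m, i)" and i = "\<lambda>(n, i). (i, n div d i)"])
       (auto simp: t_def d_pos inv_powr_mult Suc_le_eq)
  finally have "(t has_sum a * b) (SIGMA n:{1..}. {i \<in> I. d i dvd n})" .
  then show ?thesis
  proof (rule has_sum_Sigma')
    fix n :: nat assume "n \<in> {1..}"
    then show "((\<lambda>i. t (n, i)) has_sum (\<Sum>i | i \<in> I \<and> d i dvd n. c i * g (n div d i)) * inv_powr s n)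
                 {i \<in> I. d i dvd n}"
      by (intro has_sum_finiteI finite_divisors) (auto simp: t_def sum_distrib_right)
  qed
qed

lemma bigOmega_prime_mult:
  assumes "prime p" "n > 0"
  shows "bigOmega (p * n) = Suc (bigOmega n)"
  using assms unfolding bigOmega_def by (simp add: prime_factorization_mult prime_factorization_prime)

lemma prime_power_divisors_eq_Sigma:
  fixes n :: nat
  assumes "n > 0"
  shows "{(p, a). prime p \<and> a \<ge> 1 \<and> p ^ a dvd n} = (SIGMA p:prime_factors n. {1..multiplicity p n})"
proof -
  have "prime p \<and> a \<ge> 1 \<and> p ^ a dvd n \<longleftrightarrow> p \<in> prime_factors n \<and> a \<in> {1..multiplicity p n}" for p a
  proof
    assume p_a: "prime p \<and> a \<ge> 1 \<and> p ^ a dvd n"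
    then have "p dvd n"
      using dvd_power[of a p] dvd_trans by auto
    moreover have "a \<le> multiplicity p n"
      using p_a assms by (intro multiplicity_geI) (auto simp: not_prime_unit)
    ultimately show "p \<in> prime_factors n \<and> a \<in> {1..multiplicity p n}"
      using assms p_a by (auto simp: in_prime_factors_iff)
  next
    assume "p \<in> prime_factors n \<and> a \<in> {1..multiplicity p n}"
    then show "prime p \<and> a \<ge> 1 \<and> p ^ a dvd n"
      by (simp add: in_prime_factors_iff multiplicity_dvd')
  qed
  then show ?thesis by auto
qed

lemma card_prime_power_divisors:
  assumes "n > 0"
  shows "card {(p, a). prime p \<and> a \<ge> 1 \<and> p ^ a dvd n} = bigOmega n"
proof -
  have "card {(p, a). prime p \<and> a \<ge> 1 \<and> p ^ a dvd n} = (\<Sum>p\<in>prime_factors n. multiplicity p n)"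
    unfolding prime_power_divisors_eq_Sigma[OF assms] by (subst card_SigmaI) auto
  also have "\<dots> = (\<Sum>p\<in>prime_factors n. count (prime_factorization n) p)"
    by (intro sum.cong) (auto simp: count_prime_factorization)
  also have "\<dots> = bigOmega n"
    unfolding bigOmega_def by (simp add: size_multiset_overloaded_eq)
  finally show ?thesis .
qed

lemma has_sum_prime_zeta_Omega:
  assumes "Re s > 1"
  shows "((\<lambda>(p, a). inv_powr s (p ^ a)) has_sum prime_zeta_Omega s) ({p. prime p} \<times> {1..})"
proof -
  let ?P = "{p::nat. prime p} \<times> {1::nat..}"
  have "inj_on (\<lambda>(p, a). p ^ a) ?P"
    by (auto intro!: inj_onI simp: prime_power_inj'')
  then have summable: "((\<lambda>(p, a). inv_powr s (p ^ a))) summable_on ?P"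
    using summable_on_reindex inv_powr_summable_on[OF assms] by (fastforce simp: o_def case_prod_unfold)
  have geometric: "((\<lambda>a. inv_powr s (p ^ a)) has_sum of_nat (bigOmega p) / (of_nat p powr s - 1)) {1..}"
    if "prime p" for p
  proof -
    have "norm (inv_powr s p) < 1"
      using assms that by (intro norm_inv_powr_less_1) (auto simp: prime_ge_2_nat)
    moreover from this have "of_nat p powr s \<noteq> 1"
      by (auto simp: inv_powr_def)
    then have "inv_powr s p / (1 - inv_powr s p) = of_nat (bigOmega p) / (of_nat p powr s - 1)"
      using that by (simp add: inv_powr_def bigOmega_def prime_factorization_prime divide_simps)
    ultimately show ?thesis
      using has_sum_geometric_from_1[of "inv_powr s p"] by (simp add: inv_powr_power)
  qed
  have "((\<lambda>p. of_nat (bigOmega p) / (of_nat p powr s - 1)) has_sum infsum (\<lambda>(p, a). inv_powr s (p ^ a)) ?P)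
          {p. prime p}"
    by (rule has_sum_Sigma'[OF has_sum_infsum[OF summable]]) (use geometric in auto)
  then have "prime_zeta_Omega s = infsum (\<lambda>(p, a). inv_powr s (p ^ a)) ?P"
    unfolding prime_zeta_Omega_def by (rule infsumI)
  then show ?thesis
    using has_sum_infsum[OF summable] by simp
qed

lemma has_sum_bigOmega_dirichlet_series:
  assumes "Re s > 1"
  shows "((\<lambda>n. of_nat (bigOmega n) * inv_powr s n) has_sum prime_zeta_Omega s * zeta s) {1..}"
proof -
  let ?P = "{p::nat. prime p} \<times> {1::nat..}"
  have c: "((\<lambda>i. 1 * inv_powr s (case i of (p, a) \<Rightarrow> p ^ a)) has_sum prime_zeta_Omega s) ?P"
    using has_sum_prime_zeta_Omega[OF assms] by (simp add: case_prod_unfold)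
  have g: "((\<lambda>m. 1 * inv_powr s m) has_sum zeta s) {1..}"
    using has_sum_zeta[OF assms] by simp
  have divisors: "{i \<in> ?P. (case i of (p, a) \<Rightarrow> p ^ a) dvd n} = {(p, a). prime p \<and> a \<ge> 1 \<and> p ^ a dvd n}"
    for n by auto
  have finite_divisors: "finite {i \<in> ?P. (case i of (p, a) \<Rightarrow> p ^ a) dvd n}" if "n > 0" for n
    unfolding divisors prime_power_divisors_eq_Sigma[OF that] by auto
  have card_divisors: "card {i \<in> ?P. (case i of (p, a) \<Rightarrow> p ^ a) dvd n} = bigOmega n" if "n > 0" for n
    unfolding divisors by (rule card_prime_power_divisors[OF that])
  have "((\<lambda>n. (\<Sum>i | i \<in> ?P \<and> (case i of (p, a) \<Rightarrow> p ^ a) dvd n. 1 * 1) * inv_powr s n)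
          has_sum prime_zeta_Omega s * zeta s) {1..}"
    by (rule has_sum_dirichlet_product[OF _ finite_divisors c g]) (auto simp: prime_gt_0_nat)
  then show ?thesis
    by (rule has_sum_cong[THEN iffD1, rotated]) (use card_divisors in auto)
qed

lemma bigOmega_mult_beta_eq_sum:
  assumes "n > 0"
  shows "(\<Sum>q | prime q \<and> q dvd n. of_real (real q powr k) * (1 + of_nat (bigOmega (n div q)))) =
           of_nat (bigOmega n) * (of_real (beta k n) :: complex)"
proof -
  have Omega_quotient: "1 + of_nat (bigOmega (n div q)) = (of_nat (bigOmega n) :: complex)"
    if "prime q" "q dvd n" for q
  proof -
    have "n div q > 0"
      using assms that by (auto elim!: dvdE)
    then show ?thesis
      using bigOmega_prime_mult[OF \<open>prime q\<close>, of "n div q"] that by simp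
  qed
  have "{q. prime q \<and> q dvd n} = prime_factors n"
    using assms by (auto simp: in_prime_factors_iff)
  then have "(\<Sum>q | prime q \<and> q dvd n. of_real (real q powr k) * (1 + of_nat (bigOmega (n div q)))) =
               (\<Sum>q\<in>prime_factors n. of_nat (bigOmega n) * (of_real (real q powr k) :: complex))"
    using Omega_quotient by (auto simp: in_prime_factors_iff intro!: sum.cong)
  then show ?thesis
    by (simp add: beta_def sum_distrib_left)
qed

theorem theorem4p2:
  fixes k :: real and s :: complex
  assumes "Re s > max 1 (1 + k)"
  shows "((\<lambda>n::nat. of_nat (bigOmega n) * of_real (beta k n) / (of_nat n) powr s) has_sum
           (zeta s * prime_zeta (s - of_real k) * (prime_zeta_Omega s + 1))) {1..}"
proof -
  have s: "Re s > 1" and s_k: "Re (s - of_real k) > 1"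
    using assms by auto
  have c: "((\<lambda>q. of_real (real q powr k) * inv_powr s q) has_sum prime_zeta (s - of_real k)) {p. prime p}"
    using has_sum_prime_zeta[OF s_k]
    by (rule has_sum_cong[THEN iffD1, rotated]) (simp add: inv_powr_diff_of_real prime_gt_0_nat)
  have g: "((\<lambda>m. (1 + of_nat (bigOmega m)) * inv_powr s m) has_sum zeta s + prime_zeta_Omega s * zeta s) {1..}"
    using has_sum_add[OF has_sum_zeta[OF s] has_sum_bigOmega_dirichlet_series[OF s]]
    by (simp add: distrib_right)
  have "((\<lambda>n. (\<Sum>q | q \<in> {p. prime p} \<and> q dvd n. of_real (real q powr k) * (1 + of_nat (bigOmega (n div q))))
            * inv_powr s n) has_sum prime_zeta (s - of_real k) * (zeta s + prime_zeta_Omega s * zeta s)) {1..}"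
    by (rule has_sum_dirichlet_product[where d = "\<lambda>q. q", OF _ _ c g])
       (auto simp: prime_gt_0_nat intro: finite_subset[of _ "{..n}" for n] dest: dvd_imp_le)
  also have "prime_zeta (s - of_real k) * (zeta s + prime_zeta_Omega s * zeta s) =
               zeta s * prime_zeta (s - of_real k) * (prime_zeta_Omega s + 1)"
    by (simp add: algebra_simps)
  finally show ?thesis
    by (rule has_sum_cong[THEN iffD1, rotated]) (simp add: bigOmega_mult_beta_eq_sum inv_powr_def)
qed

end
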